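(* Let $T$ be a tree with $m$ edges, with the notation $T_A, T_B, t_1,\ldots,t_{a+b}, T(1),\ldots,T(a+b)$ fixed as in the context. Let $G$ be a bipartite graph on vertex classes $A$ and $B$. If $G$ admits a $T$-equitable edge-colouring, then $G$ has a $T^*$-decomposition.
   Context: All graphs are finite and loopless but may have multiple edges. Let $T$ be a tree with $m$ edges and let $T_A$, $T_B$ be the two vertex classes of a proper $2$-colouring of $T$, chosen so that $T_B$ contains a leaf of $T$. Denote the non-leaves of $T$ in $T_A$ by $t_1,\ldots,t_a$ and the non-leaves in $T_B$ by $t_{a+1},\ldots,t_{a+b}$. Colour the edges of $T$ with colours $1,\ldots,m$ so that distinct edges get distinct colours, and for $i\in\{1,\ldots,a+b\}$ let $T(i)$ be the set of colours of edges incident with $t_i$. For an edge-colouring of $G$ and a vertex $v$, $d_j(v)$ is the number of edges of colour $j$ at $v$. An edge-colouring of a bipartite graph $G$ with classes $A,B$ using colours $1,\ldots,m$ is $T$-equitable if (i) for every $v\in A$, $i\in\{1,\ldots,a\}$ and $j,k\in T(i)$ we have $d_j(v)=d_k(v)$, and (ii) for every $v\in B$, $i\in\{a+1,\ldots,a+b\}$ and $j,k\in T(i)$ we have $d_j(v)=d_k(v)$. A homomorphic copy of $T$ is a graph obtained from $T$ by identifying some vertices and keeping all edges; a $T^*$-decomposition of $G$ is a partition of $E(G)$ into subgraphs that are homomorphic copies of $T$. *)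

theory Defs
  imports Main
begin

definition simple_graph :: "'v set \<Rightarrow> 'v set set \<Rightarrow> bool" where
  "simple_graph V E \<longleftrightarrow> finite V \<and>
     (\<forall>e\<in>E. \<exists>u w. e = {u, w} \<and> u \<noteq> w \<and> u \<in> V \<and> w \<in> V)"

definition adj :: "'v set set \<Rightarrow> 'v \<Rightarrow> 'v \<Rightarrow> bool" where
  "adj E u w \<longleftrightarrow> {u, w} \<in> E"

definition graph_connected :: "'v set \<Rightarrow> 'v set set \<Rightarrow> bool" where
  "graph_connected V E \<longleftrightarrow> (\<forall>u\<in>V. \<forall>w\<in>V. (adj E)\<^sup>*\<^sup>* u w)"

definition graph_acyclic :: "'v set set \<Rightarrow> bool" where
  "graph_acyclic E \<longleftrightarrow> (\<forall>u w. {u, w} \<in> E \<longrightarrow> \<not> (adj (E - {{u, w}}))\<^sup>*\<^sup>* u w)"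

definition is_tree :: "'v set \<Rightarrow> 'v set set \<Rightarrow> bool" where
  "is_tree V E \<longleftrightarrow> simple_graph V E \<and> V \<noteq> {} \<and> graph_connected V E \<and> graph_acyclic E"

definition tdeg :: "'v set set \<Rightarrow> 'v \<Rightarrow> nat" where
  "tdeg E v = card {e\<in>E. v \<in> e}"

definition is_leaf :: "'v set set \<Rightarrow> 'v \<Rightarrow> bool" where
  "is_leaf E v \<longleftrightarrow> tdeg E v = 1"

definition proper_2col :: "'v set \<Rightarrow> 'v set set \<Rightarrow> 'v set \<Rightarrow> 'v set \<Rightarrow> bool" where
  "proper_2col V E TA TB \<longleftrightarrow> TA \<union> TB = V \<and> TA \<inter> TB = {} \<and>
     (\<forall>e\<in>E. \<exists>u w. e = {u, w} \<and> u \<in> TA \<and> w \<in> TB)"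

text \<open>Colours of the tree edges incident with a tree vertex t (the set T(i) for t = t_i).\<close>
definition tcols :: "'v set set \<Rightarrow> ('v set \<Rightarrow> nat) \<Rightarrow> 'v \<Rightarrow> nat set" where
  "tcols E c t = c ` {e\<in>E. t \<in> e}"

definition bip_multigraph :: "'a set \<Rightarrow> 'a set \<Rightarrow> 'e set \<Rightarrow> ('e \<Rightarrow> 'a) \<Rightarrow> ('e \<Rightarrow> 'a) \<Rightarrow> bool" where
  "bip_multigraph A B EG fA fB \<longleftrightarrow> finite A \<and> finite B \<and> finite EG \<and> A \<inter> B = {} \<and>
     (\<forall>e\<in>EG. fA e \<in> A \<and> fB e \<in> B)"

definition dcol :: "'e set \<Rightarrow> ('e \<Rightarrow> 'a) \<Rightarrow> ('e \<Rightarrow> 'a) \<Rightarrow> ('e \<Rightarrow> nat) \<Rightarrow> nat \<Rightarrow> 'a \<Rightarrow> nat" where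
  "dcol EG fA fB col j v = card {e\<in>EG. col e = j \<and> (fA e = v \<or> fB e = v)}"

definition T_equitable ::
  "'v set set \<Rightarrow> 'v set \<Rightarrow> 'v set \<Rightarrow> ('v set \<Rightarrow> nat) \<Rightarrow> nat \<Rightarrow>
   'a set \<Rightarrow> 'a set \<Rightarrow> 'e set \<Rightarrow> ('e \<Rightarrow> 'a) \<Rightarrow> ('e \<Rightarrow> 'a) \<Rightarrow> ('e \<Rightarrow> nat) \<Rightarrow> bool" where
  "T_equitable ET TA TB c m A B EG fA fB col \<longleftrightarrow>
     (\<forall>e\<in>EG. col e \<in> {1..m}) \<and>
     (\<forall>v\<in>A. \<forall>t\<in>TA. \<not> is_leaf ET t \<longrightarrow> (\<forall>j\<in>tcols ET c t. \<forall>k\<in>tcols ET c t.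
         dcol EG fA fB col j v = dcol EG fA fB col k v)) \<and>
     (\<forall>v\<in>B. \<forall>t\<in>TB. \<not> is_leaf ET t \<longrightarrow> (\<forall>j\<in>tcols ET c t. \<forall>k\<in>tcols ET c t.
         dcol EG fA fB col j v = dcol EG fA fB col k v))"

definition hom_copy ::
  "'v set \<Rightarrow> 'v set set \<Rightarrow> 'a set \<Rightarrow> 'a set \<Rightarrow> ('e \<Rightarrow> 'a) \<Rightarrow> ('e \<Rightarrow> 'a) \<Rightarrow> 'e set \<Rightarrow> bool" where
  "hom_copy VT ET A B fA fB F \<longleftrightarrow>
     (\<exists>phi psi. (\<forall>v\<in>VT. phi v \<in> A \<union> B) \<and> bij_betw psi ET F \<and>
        (\<forall>e\<in>ET. {fA (psi e), fB (psi e)} = phi ` e))"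

definition T_star_decomposition ::
  "'v set \<Rightarrow> 'v set set \<Rightarrow> 'a set \<Rightarrow> 'a set \<Rightarrow> 'e set \<Rightarrow> ('e \<Rightarrow> 'a) \<Rightarrow> ('e \<Rightarrow> 'a) \<Rightarrow> 'e set set \<Rightarrow> bool" where
  "T_star_decomposition VT ET A B EG fA fB P \<longleftrightarrow>
     \<Union>P = EG \<and> (\<forall>F1\<in>P. \<forall>F2\<in>P. F1 \<noteq> F2 \<longrightarrow> F1 \<inter> F2 = {}) \<and>
     (\<forall>F\<in>P. F \<subseteq> EG \<and> hom_copy VT ET A B fA fB F)"

end

theory Submission
  imports Defs
begin

text \<open>Given a \<open>T\<close>-equitable colouring, a colour-respecting homomorphic copy of \<open>T\<close> can be grown
  greedily, one tree edge at a time: whenever the copy already uses an edge of colour \<open>c e\<^sub>1\<close> at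
  the image of a non-leaf \<open>t\<close>, equitability supplies an edge of the colour \<open>c e\<close> of any other tree
  edge \<open>e\<close> at \<open>t\<close>. The copy uses exactly one edge of each colour of \<open>T(i)\<close> at the image of \<open>t\<^sub>i\<close>
  and none elsewhere, so deleting it keeps the colouring \<open>T\<close>-equitable, and induction on the
  number of edges gives the decomposition.\<close>

lemma rtranclp_exits_set:
  assumes "r\<^sup>*\<^sup>* x y" "x \<in> X" "y \<notin> X"
  shows "\<exists>p q. p \<in> X \<and> q \<notin> X \<and> r p q"
  using assms by (induction rule: rtranclp_induct) auto

lemma graph_connected_insert_edge:
  assumes "graph_connected (\<Union>S) S" "p \<in> \<Union>S"
  shows "graph_connected (\<Union>(insert {p, q} S)) (insert {p, q} S)"
proof -
  let ?S = "insert {p, q} S"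
  have mono: "(adj S)\<^sup>*\<^sup>* \<le> (adj ?S)\<^sup>*\<^sup>*" by (rule rtranclp_mono) (auto simp: adj_def)
  have pq: "adj ?S p q" "adj ?S q p" by (auto simp: adj_def insert_commute)
  have "(adj ?S)\<^sup>*\<^sup>* x p \<and> (adj ?S)\<^sup>*\<^sup>* p x" if "x \<in> \<Union>?S" for x
  proof (cases "x \<in> \<Union>S")
    case True
    then show ?thesis using assms mono unfolding graph_connected_def by blast
  next
    case False
    then have "x = p \<or> x = q" using that by auto
    then show ?thesis using pq by auto
  qed
  then show ?thesis unfolding graph_connected_def by (meson rtranclp_trans)
qed

lemma acyclic_exists_edge_leaving:
  assumes acyclic: "graph_acyclic E" and connected: "graph_connected (\<Union>E) E"
    and pairs: "\<forall>e\<in>E. \<exists>u w. e = {u, w}"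
    and "S \<subseteq> E" "S \<noteq> {}" "S \<noteq> E" and connected_S: "graph_connected (\<Union>S) S"
  shows "\<exists>p q. {p, q} \<in> E \<and> p \<in> \<Union>S \<and> q \<notin> \<Union>S"
proof -
  obtain e where "e \<in> E" "e \<notin> S" using \<open>S \<subseteq> E\<close> \<open>S \<noteq> E\<close> by blast
  then obtain u w where uw: "{u, w} \<in> E" "{u, w} \<notin> S" using pairs by metis
  have "\<not> (u \<in> \<Union>S \<and> w \<in> \<Union>S)"
  proof
    assume "u \<in> \<Union>S \<and> w \<in> \<Union>S"
    then have "(adj S)\<^sup>*\<^sup>* u w" using connected_S unfolding graph_connected_def by blast
    moreover have "adj S \<le> adj (E - {{u, w}})" using \<open>S \<subseteq> E\<close> uw unfolding adj_def by auto
    ultimately have "(adj (E - {{u, w}}))\<^sup>*\<^sup>* u w" using rtranclp_mono by blast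
    then show False using acyclic uw unfolding graph_acyclic_def by blast
  qed
  then obtain y where y: "y \<in> \<Union>E" "y \<notin> \<Union>S" using uw by blast
  obtain e1 where "e1 \<in> S" using \<open>S \<noteq> {}\<close> by blast
  moreover obtain x x' where "e1 = {x, x'}" using \<open>e1 \<in> S\<close> \<open>S \<subseteq> E\<close> pairs by blast
  ultimately have x: "x \<in> \<Union>S" by blast
  then have "x \<in> \<Union>E" using \<open>S \<subseteq> E\<close> by blast
  then have path: "(adj E)\<^sup>*\<^sup>* x y" using connected y(1) unfolding graph_connected_def by blast
  obtain p q where "p \<in> \<Union>S" "q \<notin> \<Union>S" "adj E p q"
    using rtranclp_exits_set[OF path x y(2)] by blast
  then show ?thesis unfolding adj_def by blast
qed

lemma bip_multigraph_subset:
  assumes "bip_multigraph A B E fA fB" "F \<subseteq> E"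
  shows "bip_multigraph A B F fA fB"
  using assms finite_subset unfolding bip_multigraph_def by blast

lemma dcol_Diff:
  assumes "finite E" "F \<subseteq> E"
  shows "dcol (E - F) fA fB col j v = dcol E fA fB col j v - dcol F fA fB col j v"
proof -
  let ?at = "\<lambda>X. {g\<in>X. col g = j \<and> (fA g = v \<or> fB g = v)}"
  have "?at (E - F) = ?at E - ?at F" by blast
  moreover have "finite (?at F)" using finite_subset[OF assms(2,1)] by simp
  moreover have "?at F \<subseteq> ?at E" using assms by blast
  ultimately show ?thesis unfolding dcol_def by (simp add: card_Diff_subset)
qed

lemma two_edges_not_leaf:
  assumes "finite E" "e1 \<in> E" "e2 \<in> E" "e1 \<noteq> e2" "t \<in> e1" "t \<in> e2"
  shows "\<not> is_leaf E t"
proof -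
  have "{e1, e2} \<subseteq> {e\<in>E. t \<in> e}" using assms by blast
  then have "card {e1, e2} \<le> tdeg E t" unfolding tdeg_def using assms(1) by (intro card_mono) auto
  then show ?thesis using assms(4) unfolding is_leaf_def by simp
qed

lemma graph_connected_edge: "graph_connected {u, w} {{u, w}}"
  unfolding graph_connected_def adj_def by (auto simp: insert_commute)

locale tree_embedding =
  fixes VT :: "'v set" and ET :: "'v set set" and TA TB :: "'v set"
    and c :: "'v set \<Rightarrow> nat" and m :: nat
    and A B :: "'a set" and fA fB :: "'e \<Rightarrow> 'a" and col :: "'e \<Rightarrow> nat"
  assumes tree: "is_tree VT ET"
    and two_colouring: "proper_2col VT ET TA TB"
    and edge_colouring: "bij_betw c ET {1..m}"
    and edges_nonempty: "ET \<noteq> {}"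
begin

definition side :: "'v \<Rightarrow> 'a set" where
  "side t = (if t \<in> TA then A else B)"

definition end_on_side :: "'e \<Rightarrow> 'v \<Rightarrow> 'a" where
  "end_on_side g t = (if t \<in> TA then fA g else fB g)"

definition coloured_copy :: "'e set \<Rightarrow> 'v set set \<Rightarrow> ('v \<Rightarrow> 'a) \<Rightarrow> ('v set \<Rightarrow> 'e) \<Rightarrow> bool" where
  "coloured_copy E S phi psi \<longleftrightarrow> (\<forall>t\<in>VT. phi t \<in> side t) \<and>
     (\<forall>e\<in>S. psi e \<in> E \<and> col (psi e) = c e \<and> (\<forall>t\<in>e. end_on_side (psi e) t = phi t))"

lemma TA_TB_disjoint: "TA \<inter> TB = {}"
  and VT_eq: "VT = TA \<union> TB"
  using two_colouring unfolding proper_2col_def by auto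

lemma tree_edgeE:
  assumes "e \<in> ET"
  obtains u w where "e = {u, w}" "u \<in> TA" "w \<in> TB"
  using assms two_colouring unfolding proper_2col_def by blast

lemma finite_ET: "finite ET"
  using edge_colouring bij_betw_finite by blast

lemma inj_on_c: "inj_on c ET"
  using edge_colouring unfolding bij_betw_def by blast

lemma Union_ET_subset: "\<Union>ET \<subseteq> VT"
  using tree_edgeE VT_eq by blast

lemma tree_connected: "graph_connected (\<Union>ET) ET"
  using tree Union_ET_subset unfolding is_tree_def graph_connected_def by blast

lemma tree_acyclic: "graph_acyclic ET"
  using tree unfolding is_tree_def by blast

lemma tree_edges_doubletons: "\<forall>e\<in>ET. \<exists>u w. e = {u, w}"
  by (meson tree_edgeE)

lemma end_on_side_in_side:
  assumes "bip_multigraph A B E fA fB" "g \<in> E"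
  shows "end_on_side g t \<in> side t"
  using assms unfolding bip_multigraph_def end_on_side_def side_def by auto

lemma incident_iff_end_on_side:
  assumes "bip_multigraph A B E fA fB" "g \<in> E" "v \<in> side t"
  shows "(fA g = v \<or> fB g = v) \<longleftrightarrow> end_on_side g t = v"
  using assms unfolding bip_multigraph_def end_on_side_def side_def by auto

lemma dcol_eq_card_end_on_side:
  assumes "bip_multigraph A B E fA fB" "v \<in> side t"
  shows "dcol E fA fB col j v = card {g\<in>E. col g = j \<and> end_on_side g t = v}"
  unfolding dcol_def using incident_iff_end_on_side[OF assms(1) _ assms(2)]
  by (metis (no_types, lifting))

lemma T_equitable_iff:
  "T_equitable ET TA TB c m A B E fA fB col \<longleftrightarrow> (\<forall>g\<in>E. col g \<in> {1..m}) \<and>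
     (\<forall>t\<in>VT. \<not> is_leaf ET t \<longrightarrow> (\<forall>v\<in>side t. \<forall>j\<in>tcols ET c t. \<forall>k\<in>tcols ET c t.
        dcol E fA fB col j v = dcol E fA fB col k v))"
proof -
  have "side t = A" if "t \<in> TA" for t using that by (simp add: side_def)
  moreover have "side t = B" if "t \<in> TB" for t using that TA_TB_disjoint by (auto simp: side_def)
  ultimately show ?thesis unfolding T_equitable_def VT_eq ball_Un by (intro conj_cong refl) blast+
qed

lemma exists_edge_of_sibling_colour:
  assumes bip: "bip_multigraph A B E fA fB" and eq: "T_equitable ET TA TB c m A B E fA fB col"
    and "e \<in> ET" "e' \<in> ET" "e \<noteq> e'" "t \<in> e" "t \<in> e'"
    and "g \<in> E" "col g = c e" "end_on_side g t = v"
  shows "\<exists>g'\<in>E. col g' = c e' \<and> end_on_side g' t = v"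
proof -
  have fin: "finite E" using bip unfolding bip_multigraph_def by blast
  have "t \<in> VT" using assms Union_ET_subset by blast
  moreover have "\<not> is_leaf ET t" using two_edges_not_leaf[OF finite_ET] assms by blast
  moreover have v: "v \<in> side t" using end_on_side_in_side[OF bip \<open>g \<in> E\<close>] assms by blast
  moreover have "c e \<in> tcols ET c t" "c e' \<in> tcols ET c t" using assms unfolding tcols_def by auto
  ultimately have "dcol E fA fB col (c e') v = dcol E fA fB col (c e) v"
    using eq unfolding T_equitable_iff by blast
  moreover have "dcol E fA fB col (c e) v > 0"
    unfolding dcol_eq_card_end_on_side[OF bip v] using fin assms by (auto simp: card_gt_0_iff)
  ultimately have "{g'\<in>E. col g' = c e' \<and> end_on_side g' t = v} \<noteq> {}"
    unfolding dcol_eq_card_end_on_side[OF bip v] by (metis card.empty less_irrefl)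
  then show ?thesis by blast
qed

lemma coloured_copy_extend:
  assumes bip: "bip_multigraph A B E fA fB" and eq: "T_equitable ET TA TB c m A B E fA fB col"
    and copy: "coloured_copy E S phi psi" and "S \<subseteq> ET"
    and "{p, q} \<in> ET" "p \<in> \<Union>S" "q \<notin> \<Union>S"
  shows "\<exists>phi' psi'. coloured_copy E (insert {p, q} S) phi' psi'"
proof -
  obtain e1 where e1: "e1 \<in> S" "p \<in> e1" using assms by blast
  then have "e1 \<noteq> {p, q}" "p \<noteq> q" using \<open>q \<notin> \<Union>S\<close> by blast+
  moreover have "psi e1 \<in> E" "col (psi e1) = c e1" "end_on_side (psi e1) p = phi p"
    using copy e1 unfolding coloured_copy_def by auto
  ultimately obtain g where g: "g \<in> E" "col g = c {p, q}" "end_on_side g p = phi p"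
    using exists_edge_of_sibling_colour[OF bip eq] e1 \<open>S \<subseteq> ET\<close> \<open>{p, q} \<in> ET\<close> by blast
  have "coloured_copy E (insert {p, q} S) (phi(q := end_on_side g q)) (psi({p, q} := g))"
    using copy g \<open>p \<noteq> q\<close> \<open>q \<notin> \<Union>S\<close> end_on_side_in_side[OF bip \<open>g \<in> E\<close>]
    unfolding coloured_copy_def by auto
  then show ?thesis by blast
qed

lemma coloured_copy_grow:
  assumes bip: "bip_multigraph A B E fA fB" and eq: "T_equitable ET TA TB c m A B E fA fB col"
    and "coloured_copy E S phi psi" "graph_connected (\<Union>S) S" "S \<subseteq> ET" "S \<noteq> {}"
  shows "\<exists>phi psi. coloured_copy E ET phi psi"
  using assms(3-)
proof (induction "card (ET - S)" arbitrary: S phi psi rule: less_induct)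
  case less
  show ?case
  proof (cases "S = ET")
    case True
    then show ?thesis using less.prems by blast
  next
    case False
    obtain p q where pq: "{p, q} \<in> ET" "p \<in> \<Union>S" "q \<notin> \<Union>S"
      using acyclic_exists_edge_leaving[OF tree_acyclic tree_connected tree_edges_doubletons
          less.prems(3,4) False less.prems(2)] by blast
    then obtain phi' psi' where copy': "coloured_copy E (insert {p, q} S) phi' psi'"
      using coloured_copy_extend[OF bip eq] less.prems by blast
    have "card (ET - insert {p, q} S) < card (ET - S)"
      using pq finite_ET by (intro psubset_card_mono) auto
    from less.hyps[OF this copy' graph_connected_insert_edge[OF less.prems(2) pq(2)]]
    show ?thesis using less.prems(3) pq(1) by blast
  qed
qed

lemma coloured_copy_exists:
  assumes bip: "bip_multigraph A B E fA fB" and eq: "T_equitable ET TA TB c m A B E fA fB col"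
    and "E \<noteq> {}"
  shows "\<exists>phi psi. coloured_copy E ET phi psi"
proof -
  obtain g where g: "g \<in> E" using \<open>E \<noteq> {}\<close> by blast
  then have "col g \<in> c ` ET" using eq edge_colouring unfolding T_equitable_def bij_betw_def by blast
  then obtain e where e: "e \<in> ET" "c e = col g" by auto
  obtain u w where uw: "e = {u, w}" using tree_edgeE[OF \<open>e \<in> ET\<close>] by metis
  have "coloured_copy E {e} (end_on_side g) (\<lambda>_. g)"
    using g e end_on_side_in_side[OF bip g] unfolding coloured_copy_def by auto
  moreover have "graph_connected (\<Union>{e}) {e}" using graph_connected_edge uw by simp
  ultimately show ?thesis using coloured_copy_grow[OF bip eq] e by blast
qed

lemma colour_class_of_copy:
  assumes "coloured_copy E ET phi psi" "e \<in> ET"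
  shows "{g\<in>psi ` ET. col g = c e} = {psi e}"
  using assms inj_on_c unfolding coloured_copy_def inj_on_def by auto

lemma T_equitable_Diff_copy:
  assumes bip: "bip_multigraph A B E fA fB" and eq: "T_equitable ET TA TB c m A B E fA fB col"
    and copy: "coloured_copy E ET phi psi"
  shows "T_equitable ET TA TB c m A B (E - psi ` ET) fA fB col"
proof -
  have sub: "psi ` ET \<subseteq> E" using copy unfolding coloured_copy_def by blast
  have fin: "finite E" using bip unfolding bip_multigraph_def by blast
  have copy_dcol: "dcol (psi ` ET) fA fB col (c e) v = (if phi t = v then 1 else 0)"
    if "e \<in> ET" "t \<in> e" "v \<in> side t" for e t v
  proof -
    have "end_on_side (psi e) t = phi t" using copy that unfolding coloured_copy_def by blast
    have "{g\<in>psi ` ET. col g = c e \<and> end_on_side g t = v} = {g\<in>{psi e}. end_on_side g t = v}"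
      using colour_class_of_copy[OF copy \<open>e \<in> ET\<close>] by blast
    also have "\<dots> = (if phi t = v then {psi e} else {})"
      using \<open>end_on_side (psi e) t = phi t\<close> by auto
    finally show ?thesis
      using dcol_eq_card_end_on_side[OF bip_multigraph_subset[OF bip sub] \<open>v \<in> side t\<close>] by simp
  qed
  show ?thesis unfolding T_equitable_iff
  proof (intro conjI ballI impI)
    show "col g \<in> {1..m}" if "g \<in> E - psi ` ET" for g using that eq unfolding T_equitable_def by blast
  next
    fix t v j k
    assume t: "t \<in> VT" "\<not> is_leaf ET t" and v: "v \<in> side t"
      and j: "j \<in> tcols ET c t" and k: "k \<in> tcols ET c t"
    from j k obtain ej ek where "ej \<in> ET" "t \<in> ej" "j = c ej" "ek \<in> ET" "t \<in> ek" "k = c ek"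
      unfolding tcols_def by blast
    moreover have "dcol E fA fB col j v = dcol E fA fB col k v"
      using eq t v j k unfolding T_equitable_iff by blast
    ultimately show "dcol (E - psi ` ET) fA fB col j v = dcol (E - psi ` ET) fA fB col k v"
      using v by (simp add: dcol_Diff[OF fin sub] copy_dcol)
  qed
qed

lemma hom_copy_of_coloured_copy:
  assumes copy: "coloured_copy E ET phi psi"
  shows "hom_copy VT ET A B fA fB (psi ` ET)"
  unfolding hom_copy_def
proof (intro exI conjI ballI)
  show "phi t \<in> A \<union> B" if "t \<in> VT" for t
    using copy that unfolding coloured_copy_def side_def by (auto split: if_splits)
  have "inj_on psi ET"
    using copy inj_on_c unfolding coloured_copy_def inj_on_def by metis
  then show "bij_betw psi ET (psi ` ET)" by (simp add: bij_betw_def)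
  show "{fA (psi e), fB (psi e)} = phi ` e" if "e \<in> ET" for e
  proof -
    obtain u w where "e = {u, w}" "u \<in> TA" "w \<in> TB" using tree_edgeE \<open>e \<in> ET\<close> by blast
    moreover have "w \<notin> TA" using \<open>w \<in> TB\<close> TA_TB_disjoint by blast
    ultimately show ?thesis using copy that unfolding coloured_copy_def end_on_side_def by auto
  qed
qed

lemma T_star_decomposition_exists:
  assumes "bip_multigraph A B E fA fB" "T_equitable ET TA TB c m A B E fA fB col"
  shows "\<exists>P. T_star_decomposition VT ET A B E fA fB P"
  using assms
proof (induction "card E" arbitrary: E rule: less_induct)
  case less
  show ?case
  proof (cases "E = {}")
    case True
    then show ?thesis unfolding T_star_decomposition_def by (intro exI[of _ "{}"]) auto
  next
    case False
    then obtain phi psi where copy: "coloured_copy E ET phi psi"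
      using coloured_copy_exists less.prems by blast
    let ?F = "psi ` ET"
    have sub: "?F \<subseteq> E" using copy unfolding coloured_copy_def by blast
    have "finite E" using less.prems(1) unfolding bip_multigraph_def by blast
    moreover have "E - ?F \<subset> E" using sub edges_nonempty by blast
    ultimately have "card (E - ?F) < card E" by (rule psubset_card_mono)
    then obtain P where P: "T_star_decomposition VT ET A B (E - ?F) fA fB P"
      using less.hyps bip_multigraph_subset[OF less.prems(1)]
        T_equitable_Diff_copy[OF less.prems copy] by blast
    have "T_star_decomposition VT ET A B E fA fB (insert ?F P)"
      using P sub hom_copy_of_coloured_copy[OF copy] edges_nonempty
      unfolding T_star_decomposition_def by (auto 0 3)
    then show ?thesis by blast
  qed
qed

end

theorem lemma12:
  fixes VT :: "'v set" and ET :: "'v set set" and TA TB :: "'v set"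
    and c :: "'v set \<Rightarrow> nat" and m :: nat
    and A B :: "'a set" and EG :: "'e set" and fA fB :: "'e \<Rightarrow> 'a"
  assumes "is_tree VT ET"
    and "m = card ET"
    and "proper_2col VT ET TA TB"
    and "\<exists>l\<in>TB. is_leaf ET l"
    and "bij_betw c ET {1..m}"
    and "bip_multigraph A B EG fA fB"
    and "\<exists>col. T_equitable ET TA TB c m A B EG fA fB col"
  shows "\<exists>P. T_star_decomposition VT ET A B EG fA fB P"
proof -
  obtain col where col: "T_equitable ET TA TB c m A B EG fA fB col" using assms(7) by blast
  \<comment> \<open>The leaf in \<open>T\<^sub>B\<close> only serves to exclude the edgeless tree.\<close>
  have "ET \<noteq> {}" using assms(4) unfolding is_leaf_def tdeg_def by auto
  then interpret tree_embedding VT ET TA TB c m A B fA fB col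
    using assms(1,3,5) by unfold_locales
  show ?thesis using T_star_decomposition_exists[OF assms(6) col] .
qed

end
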